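(* Let $\gamma>-1/2$. For every $a\in\mathbb{C}$ with $\operatorname{Im}(a)\neq0$, \[ (2\gamma+1)\frac{|{}_1F_1(\gamma;2\gamma+1;ia)|^2-|{}_1F_1(1+\gamma;2\gamma+1;ia)|^2}{2\operatorname{Im}(a)}>0, \] and for every $a\in\mathbb{R}$, $T(a)>0$, where \[ T(a)={}_1F_1(1+\gamma;2\gamma+1;-ia)\,{}_1F_1(2+\gamma;2\gamma+2;ia)(1+\gamma)-{}_1F_1(\gamma;2\gamma+1;-ia)\,{}_1F_1(1+\gamma;2\gamma+2;ia)\,\gamma . \]
   Context: ${}_1F_1(\alpha;\beta;z)=\sum_{k\ge0}\frac{(\alpha)_k}{(\beta)_k}\frac{z^k}{k!}$ is the confluent hypergeometric function, with $(v)_k$ the rising factorial. (For real $a$ the paper interprets the displayed quotient as $T(a)$.) *)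

theory Defs
  imports "HOL-Analysis.Analysis"
begin

definition hyp1F1 :: "complex \<Rightarrow> complex \<Rightarrow> complex \<Rightarrow> complex" where
  "hyp1F1 \<alpha> \<beta> z = (\<Sum>k. pochhammer \<alpha> k / pochhammer \<beta> k * z ^ k / of_nat (fact k))"

definition T_fun :: "real \<Rightarrow> real \<Rightarrow> complex" where
  "T_fun \<gamma> a =
     hyp1F1 (1 + of_real \<gamma>) (2 * of_real \<gamma> + 1) (- \<i> * of_real a)
       * hyp1F1 (2 + of_real \<gamma>) (2 * of_real \<gamma> + 2) (\<i> * of_real a) * (1 + of_real \<gamma>)
   - hyp1F1 (of_real \<gamma>) (2 * of_real \<gamma> + 1) (- \<i> * of_real a)
       * hyp1F1 (1 + of_real \<gamma>) (2 * of_real \<gamma> + 2) (\<i> * of_real a) * of_real \<gamma>"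

end

theory Submission
  imports Defs
begin

text \<open>Write \<open>F = \<^sub>1F\<^sub>1(\<gamma>; 2\<gamma>+1; \<cdot>)\<close> and \<open>G = \<^sub>1F\<^sub>1(\<gamma>+1; 2\<gamma>+1; \<cdot>)\<close>. Two contiguous relations give the
  first-order system \<open>w F' = \<gamma> (G - F)\<close>, \<open>w G' = \<gamma> (F - G) + w G\<close>. Along a ray \<open>t \<mapsto> t z\<close> the gap
  \<open>D(t) = |G(tz)|\<^sup>2 - |F(tz)|\<^sup>2\<close> satisfies \<open>t D' + 2\<gamma> D = 2 t Re z |G(tz)|\<^sup>2\<close>, i.e.
  \<open>(t\<^bsup>2\<gamma>\<^esup> D)' = 2 Re z t\<^bsup>2\<gamma>\<^esup> |G(tz)|\<^sup>2\<close>; as \<open>2\<gamma> > -1\<close> and \<open>D(0) = 0\<close>, \<open>D(1)\<close> has the sign of \<open>Re z\<close>,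
  which is the first claim for \<open>z = \<i> a\<close>. For real \<open>a\<close>, \<open>T(a) = (2\<gamma>+1) (conj G G' - conj F F')(\<i> a)\<close>;
  since \<open>D \<equiv> 0\<close> on the imaginary axis this equals \<open>(2\<gamma>+1) S(1)\<close>, where
  \<open>S(t) = t |G(t\<i>a)|\<^sup>2 + (2\<gamma>/a) Im (conj G F)(t\<i>a)\<close> satisfies \<open>(t\<^bsup>2\<gamma>\<^esup> S)' = t\<^bsup>2\<gamma>\<^esup> |G(t\<i>a)|\<^sup>2 > 0\<close>.\<close>

section \<open>Kummer's series\<close>

definition hyp1F1_coeff :: "complex \<Rightarrow> complex \<Rightarrow> nat \<Rightarrow> complex" where
  "hyp1F1_coeff \<alpha> \<beta> k = pochhammer \<alpha> k / pochhammer \<beta> k / of_nat (fact k)"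

lemma hyp1F1_conv_suminf: "hyp1F1 \<alpha> \<beta> z = (\<Sum>k. hyp1F1_coeff \<alpha> \<beta> k * z ^ k)"
  unfolding hyp1F1_def hyp1F1_coeff_def by (simp add: field_simps)

lemma hyp1F1_0 [simp]: "hyp1F1 \<alpha> \<beta> 0 = 1"
  unfolding hyp1F1_conv_suminf powser_zero by (simp add: hyp1F1_coeff_def)

lemma pochhammer_nonzero_if_Re_pos:
  assumes "0 < Re \<beta>"
  shows "pochhammer \<beta> n \<noteq> 0"
  using assms by (auto simp: pochhammer_eq_0_iff)

lemma hyp1F1_coeff_Suc:
  assumes "0 < Re \<beta>"
  shows "hyp1F1_coeff \<alpha> \<beta> (Suc n) =
           hyp1F1_coeff \<alpha> \<beta> n * ((\<alpha> + of_nat n) / ((\<beta> + of_nat n) * of_nat (Suc n)))"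
  using pochhammer_nonzero_if_Re_pos[OF assms, of n] pochhammer_nonzero_if_Re_pos[OF assms, of "Suc n"]
  by (simp add: hyp1F1_coeff_def pochhammer_rec' field_simps)

lemma norm_hyp1F1_coeff_ratio_le:
  assumes "0 < Re \<beta>"
  shows "norm ((\<alpha> + of_nat n) / ((\<beta> + of_nat n) * of_nat (Suc n))) \<le> (norm \<alpha> / Re \<beta> + 1) / (n + 1)"
proof -
  define C where "C = norm \<alpha> / Re \<beta> + 1"
  have Re_le: "Re \<beta> + n \<le> norm (\<beta> + of_nat n)"
    using complex_Re_le_cmod[of "\<beta> + of_nat n"] by simp
  have "norm (\<alpha> + of_nat n) \<le> norm \<alpha> + n"
    using norm_triangle_ineq[of \<alpha> "of_nat n"] by simp
  also have "\<dots> \<le> C * (Re \<beta> + n)"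
    using assms by (simp add: C_def field_simps)
  also have "\<dots> \<le> C * norm (\<beta> + of_nat n)"
    using Re_le assms by (intro mult_left_mono) (simp_all add: C_def add_pos_nonneg)
  finally have numer: "norm (\<alpha> + of_nat n) \<le> C * norm (\<beta> + of_nat n)" .
  have "0 < norm (\<beta> + of_nat n)"
    using Re_le assms by (smt (verit) of_nat_0_le_iff)
  with numer have "norm (\<alpha> + of_nat n) / (norm (\<beta> + of_nat n) * (n + 1)) \<le> C / (n + 1)"
    by (simp add: divide_simps)
  then show ?thesis
    by (simp add: norm_divide norm_mult C_def del: of_nat_Suc)
qed

lemma summable_hyp1F1:
  assumes "0 < Re \<beta>"
  shows "summable (\<lambda>k. hyp1F1_coeff \<alpha> \<beta> k * z ^ k)"
proof -
  define C where "C = norm \<alpha> / Re \<beta> + 1"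
  show ?thesis
  proof (rule summable_ratio_test[where c = "1/2" and N = "nat \<lceil>2 * C * norm z\<rceil>"])
    fix n assume "nat \<lceil>2 * C * norm z\<rceil> \<le> n"
    then have n: "2 * C * norm z \<le> n"
      by linarith
    have "norm ((\<alpha> + of_nat n) / ((\<beta> + of_nat n) * of_nat (Suc n))) * norm z \<le> C / (n + 1) * norm z"
      using norm_hyp1F1_coeff_ratio_le[OF assms] by (intro mult_right_mono) (simp_all add: C_def)
    also have "\<dots> \<le> 1/2"
      using n by (simp add: field_simps)
    finally have ratio: "norm ((\<alpha> + of_nat n) / ((\<beta> + of_nat n) * of_nat (Suc n))) * norm z \<le> 1/2" .
    have "norm (hyp1F1_coeff \<alpha> \<beta> (Suc n) * z ^ Suc n) = norm (hyp1F1_coeff \<alpha> \<beta> n * z ^ n) *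
            (norm ((\<alpha> + of_nat n) / ((\<beta> + of_nat n) * of_nat (Suc n))) * norm z)"
      unfolding hyp1F1_coeff_Suc[OF assms] norm_mult norm_power power_Suc by (simp only: mult_ac)
    also have "\<dots> \<le> norm (hyp1F1_coeff \<alpha> \<beta> n * z ^ n) * (1/2)"
      by (intro mult_left_mono ratio) simp
    finally show "norm (hyp1F1_coeff \<alpha> \<beta> (Suc n) * z ^ Suc n) \<le> 1/2 * norm (hyp1F1_coeff \<alpha> \<beta> n * z ^ n)"
      by simp
  qed simp
qed

lemma sums_hyp1F1:
  assumes "0 < Re \<beta>"
  shows "(\<lambda>k. hyp1F1_coeff \<alpha> \<beta> k * z ^ k) sums hyp1F1 \<alpha> \<beta> z"
  using summable_sums[OF summable_hyp1F1[OF assms]] by (simp add: hyp1F1_conv_suminf)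

lemma diffs_hyp1F1_coeff:
  "diffs (hyp1F1_coeff \<alpha> \<beta>) n = \<alpha> / \<beta> * hyp1F1_coeff (\<alpha> + 1) (\<beta> + 1) n"
proof -
  have cancel: "s * (x / (s * f)) = x / f" if "s \<noteq> 0" for s x f :: complex
    using that by (cases "f = 0") (simp_all add: field_simps)
  have "diffs (hyp1F1_coeff \<alpha> \<beta>) n =
          of_nat (Suc n) * (\<alpha> * pochhammer (\<alpha> + 1) n / (\<beta> * pochhammer (\<beta> + 1) n)
            / (of_nat (Suc n) * of_nat (fact n)))"
    unfolding diffs_def hyp1F1_coeff_def by (simp only: pochhammer_rec fact_Suc of_nat_mult of_nat_id)
  also have "\<dots> = \<alpha> * pochhammer (\<alpha> + 1) n / (\<beta> * pochhammer (\<beta> + 1) n) / of_nat (fact n)"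
    by (rule cancel) (metis of_nat_eq_0_iff Zero_not_Suc)
  finally show ?thesis
    unfolding hyp1F1_coeff_def by (simp only: times_divide_times_eq divide_divide_eq_left mult.assoc)
qed

lemma sums_diffs_hyp1F1_coeff:
  assumes "0 < Re \<beta>"
  shows "(\<lambda>n. diffs (hyp1F1_coeff \<alpha> \<beta>) n * z ^ n) sums (\<alpha> / \<beta> * hyp1F1 (\<alpha> + 1) (\<beta> + 1) z)"
  using sums_mult[OF sums_hyp1F1[where \<alpha> = "\<alpha> + 1" and \<beta> = "\<beta> + 1" and z = z], of "\<alpha> / \<beta>"] assms
  by (simp add: diffs_hyp1F1_coeff mult.assoc)

lemma hyp1F1_has_field_derivative:
  assumes "0 < Re \<beta>"
  shows "(hyp1F1 \<alpha> \<beta> has_field_derivative \<alpha> / \<beta> * hyp1F1 (\<alpha> + 1) (\<beta> + 1) z) (at z)"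
proof -
  have "hyp1F1 \<alpha> \<beta> = (\<lambda>z. \<Sum>k. hyp1F1_coeff \<alpha> \<beta> k * z ^ k)"
    by (simp add: fun_eq_iff hyp1F1_conv_suminf)
  with termdiffs_strong_converges_everywhere[OF summable_hyp1F1[OF assms], where x = z]
    sums_unique[OF sums_diffs_hyp1F1_coeff[OF assms, of \<alpha> z]]
  show ?thesis by simp
qed

lemma sums_of_nat_mult_hyp1F1_coeff:
  assumes "0 < Re \<beta>"
  shows "(\<lambda>n. of_nat n * hyp1F1_coeff \<alpha> \<beta> n * z ^ n) sums (z * (\<alpha> / \<beta> * hyp1F1 (\<alpha> + 1) (\<beta> + 1) z))"
proof -
  let ?c = "hyp1F1_coeff \<alpha> \<beta>"
  note diffs_sums = sums_diffs_hyp1F1_coeff[OF assms, of \<alpha> z]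
  have "(\<lambda>n. of_nat n * ?c n * z ^ (n - Suc 0)) sums (\<Sum>n. diffs ?c n * z ^ n)"
    by (rule diffs_equiv[OF sums_summable[OF diffs_sums]])
  also have "(\<Sum>n. diffs ?c n * z ^ n) = \<alpha> / \<beta> * hyp1F1 (\<alpha> + 1) (\<beta> + 1) z"
    by (rule sums_unique[OF diffs_sums, symmetric])
  finally have "(\<lambda>n. z * (of_nat n * ?c n * z ^ (n - Suc 0))) sums (z * (\<alpha> / \<beta> * hyp1F1 (\<alpha> + 1) (\<beta> + 1) z))"
    by (rule sums_mult)
  also have "(\<lambda>n. z * (of_nat n * ?c n * z ^ (n - Suc 0))) = (\<lambda>n. of_nat n * ?c n * z ^ n)"
  proof
    show "z * (of_nat n * ?c n * z ^ (n - Suc 0)) = of_nat n * ?c n * z ^ n" for n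
      by (cases n) simp_all
  qed
  finally show ?thesis .
qed

lemma of_nat_mult_hyp1F1_coeff:
  "of_nat n * hyp1F1_coeff \<alpha> \<beta> n = \<alpha> * (hyp1F1_coeff (\<alpha> + 1) \<beta> n - hyp1F1_coeff \<alpha> \<beta> n)"
proof -
  have "of_nat n * pochhammer \<alpha> n = \<alpha> * (pochhammer (\<alpha> + 1) n - pochhammer \<alpha> n)"
    using pochhammer_rec[of \<alpha> n] pochhammer_rec'[of \<alpha> n] by (simp add: algebra_simps)
  then show ?thesis
    unfolding hyp1F1_coeff_def by (simp add: divide_simps)
qed

lemma of_nat_Suc_mult_hyp1F1_coeff_succ:
  assumes "0 < Re \<beta>"
  shows "of_nat (Suc m) * hyp1F1_coeff (\<alpha> + 1) \<beta> (Suc m) =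
           (\<beta> - \<alpha> - 1) * (hyp1F1_coeff \<alpha> \<beta> (Suc m) - hyp1F1_coeff (\<alpha> + 1) \<beta> (Suc m))
           + hyp1F1_coeff (\<alpha> + 1) \<beta> m"
proof -
  have field_identity:
    "s * ((a + 1 + n) * P / (c * Q) / (s * f)) =
       (b - a - 1) * (a * P / (c * Q) / (s * f) - (a + 1 + n) * P / (c * Q) / (s * f)) + P / Q / f"
    if "Q \<noteq> 0" "f \<noteq> 0" "c = b + n" "c \<noteq> 0" "s = n + 1" "s \<noteq> 0" for a b n s c P Q f :: complex
    using that(1,2,4,6) by (simp add: divide_simps) (simp add: that(3,5) algebra_simps)
  have "pochhammer \<beta> m \<noteq> 0" "\<beta> + of_nat m \<noteq> 0"
    using pochhammer_nonzero_if_Re_pos[OF assms, of "Suc m"] by (simp_all add: pochhammer_rec')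
  then show ?thesis
    unfolding hyp1F1_coeff_def pochhammer_rec'[of "\<alpha> + 1" m] pochhammer_rec'[of \<beta> m]
      pochhammer_rec[of \<alpha> m] fact_Suc of_nat_mult of_nat_id
    by (intro field_identity) (simp_all, metis of_nat_Suc of_nat_eq_0_iff Zero_not_Suc add.commute)
qed

lemma hyp1F1_deriv_contiguous:
  assumes "0 < Re \<beta>"
  shows "z * (\<alpha> / \<beta> * hyp1F1 (\<alpha> + 1) (\<beta> + 1) z) = \<alpha> * (hyp1F1 (\<alpha> + 1) \<beta> z - hyp1F1 \<alpha> \<beta> z)"
proof -
  have "(\<lambda>n. \<alpha> * (hyp1F1_coeff (\<alpha> + 1) \<beta> n * z ^ n - hyp1F1_coeff \<alpha> \<beta> n * z ^ n)) sums
          (\<alpha> * (hyp1F1 (\<alpha> + 1) \<beta> z - hyp1F1 \<alpha> \<beta> z))"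
    by (intro sums_mult sums_diff sums_hyp1F1 assms)
  moreover have "(\<lambda>n. \<alpha> * (hyp1F1_coeff (\<alpha> + 1) \<beta> n * z ^ n - hyp1F1_coeff \<alpha> \<beta> n * z ^ n)) =
                 (\<lambda>n. of_nat n * hyp1F1_coeff \<alpha> \<beta> n * z ^ n)"
    by (simp add: fun_eq_iff of_nat_mult_hyp1F1_coeff algebra_simps)
  ultimately show ?thesis
    using sums_unique2[OF sums_of_nat_mult_hyp1F1_coeff[OF assms]] by simp
qed

lemma hyp1F1_succ_deriv_contiguous:
  assumes "0 < Re \<beta>"
  shows "z * ((\<alpha> + 1) / \<beta> * hyp1F1 (\<alpha> + 2) (\<beta> + 1) z) =
           (\<beta> - \<alpha> - 1) * (hyp1F1 \<alpha> \<beta> z - hyp1F1 (\<alpha> + 1) \<beta> z) + z * hyp1F1 (\<alpha> + 1) \<beta> z"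
proof -
  let ?f = "hyp1F1_coeff \<alpha> \<beta>" and ?g = "hyp1F1_coeff (\<alpha> + 1) \<beta>"
  define shifted where "shifted n = (case n of 0 \<Rightarrow> 0 | Suc m \<Rightarrow> ?g m * z ^ Suc m)" for n
  have "(\<lambda>n. shifted (Suc n)) = (\<lambda>n. z * (?g n * z ^ n))"
    by (simp add: fun_eq_iff shifted_def mult_ac)
  then have "(\<lambda>n. shifted (Suc n)) sums (z * hyp1F1 (\<alpha> + 1) \<beta> z)"
    using sums_mult[OF sums_hyp1F1[OF assms]] by simp
  then have "shifted sums (z * hyp1F1 (\<alpha> + 1) \<beta> z)"
    using sums_Suc_iff[of shifted] by (simp add: shifted_def)
  then have "(\<lambda>n. (\<beta> - \<alpha> - 1) * (?f n * z ^ n - ?g n * z ^ n) + shifted n) sums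
               ((\<beta> - \<alpha> - 1) * (hyp1F1 \<alpha> \<beta> z - hyp1F1 (\<alpha> + 1) \<beta> z) + z * hyp1F1 (\<alpha> + 1) \<beta> z)"
    by (intro sums_add sums_mult sums_diff sums_hyp1F1 assms)
  also have "(\<lambda>n. (\<beta> - \<alpha> - 1) * (?f n * z ^ n - ?g n * z ^ n) + shifted n) =
             (\<lambda>n. of_nat n * ?g n * z ^ n)"
  proof
    fix n show "(\<beta> - \<alpha> - 1) * (?f n * z ^ n - ?g n * z ^ n) + shifted n = of_nat n * ?g n * z ^ n"
    proof (cases n)
      case (Suc m)
      then show ?thesis
        using arg_cong[OF of_nat_Suc_mult_hyp1F1_coeff_succ[OF assms, of m \<alpha>], of "\<lambda>c. c * z ^ Suc m"]
        by (simp add: shifted_def algebra_simps del: of_nat_Suc)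
    qed (simp add: shifted_def hyp1F1_coeff_def)
  qed
  finally have "(\<lambda>n. of_nat n * ?g n * z ^ n) sums
      ((\<beta> - \<alpha> - 1) * (hyp1F1 \<alpha> \<beta> z - hyp1F1 (\<alpha> + 1) \<beta> z) + z * hyp1F1 (\<alpha> + 1) \<beta> z)" .
  moreover have "(\<lambda>n. of_nat n * ?g n * z ^ n) sums (z * ((\<alpha> + 1) / \<beta> * hyp1F1 (\<alpha> + 2) (\<beta> + 1) z))"
    using sums_of_nat_mult_hyp1F1_coeff[OF assms, of "\<alpha> + 1" z] by (simp add: add.assoc)
  ultimately show ?thesis
    by (rule sums_unique2[symmetric])
qed

lemma cnj_hyp1F1:
  assumes "0 < Re \<beta>"
  shows "cnj (hyp1F1 \<alpha> \<beta> z) = hyp1F1 (cnj \<alpha>) (cnj \<beta>) (cnj z)"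
proof (rule sums_unique2)
  show "(\<lambda>k. hyp1F1_coeff (cnj \<alpha>) (cnj \<beta>) k * cnj z ^ k) sums cnj (hyp1F1 \<alpha> \<beta> z)"
    using sums_cnj[THEN iffD2, OF sums_hyp1F1[OF assms]] by (simp add: hyp1F1_coeff_def)
  show "(\<lambda>k. hyp1F1_coeff (cnj \<alpha>) (cnj \<beta>) k * cnj z ^ k) sums hyp1F1 (cnj \<alpha>) (cnj \<beta>) (cnj z)"
    using assms by (intro sums_hyp1F1) simp
qed

section \<open>A linear ODE with a regular singular point at 0\<close>

lemma powr_mult_tendsto_0_at_right_0:
  fixes f :: "real \<Rightarrow> real"
  assumes "f 0 = 0" "f differentiable (at 0)" "-1 < e"
  shows "((\<lambda>t. t powr e * f t) \<longlongrightarrow> 0) (at_right 0)"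
proof -
  obtain d where "(f has_real_derivative d) (at 0)"
    using assms(2) real_differentiable_def by blast
  then have "((\<lambda>h. (f (0 + h) - f 0) / h) \<longlongrightarrow> d) (at 0)"
    by (simp add: DERIV_def)
  then have quotient: "((\<lambda>t. f t / t) \<longlongrightarrow> d) (at_right 0)"
    using assms(1) tendsto_mono[OF at_within_le_at] by fastforce
  have "((\<lambda>t. t powr (e + 1)) \<longlongrightarrow> 0) (at_right 0)"
    using assms(3) eventually_at_right_less[of 0]
    by (intro tendsto_zero_powrI) (auto intro: tendsto_ident_at elim: eventually_mono)
  from tendsto_mult[OF this quotient] have "((\<lambda>t. t powr (e + 1) * (f t / t)) \<longlongrightarrow> 0) (at_right 0)"
    by simp
  moreover have "eventually (\<lambda>t. t powr (e + 1) * (f t / t) = t powr e * f t) (at_right 0)"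
    using eventually_at_right_less[of 0] by eventually_elim (simp add: powr_add)
  ultimately show ?thesis
    by (simp add: tendsto_cong)
qed

lemma powr_mult_has_real_derivative:
  assumes "0 < t" "(Q has_real_derivative R - c / t * Q t) (at t)"
  shows "((\<lambda>t. t powr c * Q t) has_real_derivative t powr c * R) (at t)"
proof -
  have "((\<lambda>t. t powr c * Q t) has_real_derivative
          c * t powr (c - 1) * Q t + (R - c / t * Q t) * t powr c) (at t)"
    by (intro DERIV_mult has_real_derivative_powr assms)
  moreover have "c * t powr (c - 1) * Q t + (R - c / t * Q t) * t powr c = t powr c * R"
    using assms(1) by (simp add: powr_diff field_simps)
  ultimately show ?thesis
    by simp
qed

lemma singular_ode_nonneg:
  fixes Q R :: "real \<Rightarrow> real"
  assumes "0 < b" "-1 < c" "Q 0 = 0" "Q differentiable (at 0)"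
    and deriv: "\<And>t. 0 < t \<Longrightarrow> t \<le> b \<Longrightarrow> (Q has_real_derivative R t - c / t * Q t) (at t)"
    and nonneg: "\<And>t. 0 < t \<Longrightarrow> t \<le> b \<Longrightarrow> 0 \<le> R t"
  shows "0 \<le> Q b"
proof -
  let ?K = "\<lambda>t. t powr c * Q t"
  have mono: "?K r \<le> ?K b" if "0 < r" "r \<le> b" for r
  proof (rule DERIV_nonneg_imp_nondecreasing[where f = ?K, OF \<open>r \<le> b\<close>])
    fix t assume "r \<le> t" "t \<le> b"
    with \<open>0 < r\<close> have "0 < t" by simp
    show "\<exists>y. (?K has_real_derivative y) (at t) \<and> 0 \<le> y"
      using powr_mult_has_real_derivative[OF \<open>0 < t\<close> deriv] nonneg \<open>0 < t\<close> \<open>t \<le> b\<close> by auto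
  qed
  have "eventually (\<lambda>r. 0 < r \<and> r \<le> b) (at_right 0)"
    using \<open>0 < b\<close> unfolding eventually_at_right_field by (intro exI[of _ b]) auto
  then have "eventually (\<lambda>r. ?K r \<le> ?K b) (at_right 0)"
    by (rule eventually_mono) (use mono in blast)
  then have "0 \<le> ?K b"
    using tendsto_le[OF _ tendsto_const powr_mult_tendsto_0_at_right_0[OF assms(3,4,2)]] by simp
  with \<open>0 < b\<close> show ?thesis
    by (simp add: zero_le_mult_iff)
qed

lemma singular_ode_pos:
  fixes Q R :: "real \<Rightarrow> real"
  assumes "0 < b" "-1 < c" "Q 0 = 0" "Q differentiable (at 0)"
    and deriv: "\<And>t. 0 < t \<Longrightarrow> t \<le> b \<Longrightarrow> (Q has_real_derivative R t - c / t * Q t) (at t)"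
    and nonneg: "\<And>t. 0 < t \<Longrightarrow> t \<le> b \<Longrightarrow> 0 \<le> R t"
    and pos_near_0: "eventually (\<lambda>t. 0 < R t) (at_right 0)"
  shows "0 < Q b"
proof -
  let ?K = "\<lambda>t. t powr c * Q t"
  have K_deriv: "(?K has_real_derivative t powr c * R t) (at t)" if "0 < t" "t \<le> b" for t
    using powr_mult_has_real_derivative[OF that(1) deriv[OF that]] .
  obtain e where "0 < e" and R_pos: "\<And>t. 0 < t \<Longrightarrow> t < e \<Longrightarrow> 0 < R t"
    using pos_near_0 unfolding eventually_at_right_field by auto
  define s where "s = min (e / 2) b"
  have s: "0 < s" "s < e" "s \<le> b"
    using \<open>0 < e\<close> \<open>0 < b\<close> by (auto simp: s_def)
  have "0 \<le> Q (s / 2)"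
    using s deriv nonneg by (intro singular_ode_nonneg[where R = R, OF _ assms(2-4)]) auto
  then have "0 \<le> ?K (s / 2)"
    by simp
  also have "\<dots> < ?K s"
  proof (rule DERIV_pos_imp_increasing[where f = ?K])
    fix t assume "s / 2 \<le> t" "t \<le> s"
    with s have "0 < t" "t \<le> b" "t < e" by auto
    then show "\<exists>y. (?K has_real_derivative y) (at t) \<and> 0 < y"
      using K_deriv R_pos by (intro exI[of _ "t powr c * R t"] conjI) auto
  qed (use s in simp)
  also have "\<dots> \<le> ?K b"
  proof (rule DERIV_nonneg_imp_nondecreasing[where f = ?K, OF \<open>s \<le> b\<close>])
    fix t assume "s \<le> t" "t \<le> b"
    with s have "0 < t" "t \<le> b" by auto
    then show "\<exists>y. (?K has_real_derivative y) (at t) \<and> 0 \<le> y"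
      using K_deriv nonneg by (intro exI[of _ "t powr c * R t"] conjI) auto
  qed
  finally show ?thesis
    using \<open>0 < b\<close> by (simp add: zero_less_mult_iff)
qed

lemma sgn_singular_ode:
  fixes Q P :: "real \<Rightarrow> real"
  assumes "0 < b" "-1 < c" "Q 0 = 0" "Q differentiable (at 0)"
    and deriv: "\<And>t. 0 < t \<Longrightarrow> t \<le> b \<Longrightarrow> (Q has_real_derivative r * P t - c / t * Q t) (at t)"
    and nonneg: "\<And>t. 0 < t \<Longrightarrow> t \<le> b \<Longrightarrow> 0 \<le> P t"
    and pos_near_0: "eventually (\<lambda>t. 0 < P t) (at_right 0)"
  shows "sgn (Q b) = sgn r"
proof -
  have scaled: "((\<lambda>t. s * Q t) has_real_derivative s * r * P t - c / t * (s * Q t)) (at t)"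
    if "0 < t" "t \<le> b" for s t
    using DERIV_cmult[OF deriv[OF that], of s] by (simp add: algebra_simps)
  have scaled_0: "(\<lambda>t. s * Q t) differentiable (at 0)" for s
    using assms(4) by (intro differentiable_mult differentiable_const)
  have pos: "0 < s * Q b" if "0 < s * r" for s
    using that nonneg pos_near_0
    by (intro singular_ode_pos[where R = "\<lambda>t. s * r * P t", OF assms(1,2) _ scaled_0 scaled])
       (auto simp: assms(3) elim!: eventually_mono)
  have nonneg_0: "0 \<le> s * Q b" if "r = 0" for s
    using that by (intro singular_ode_nonneg[where R = "\<lambda>t. s * r * P t", OF assms(1,2) _ scaled_0 scaled])
      (auto simp: assms(3))
  consider "0 < r" | "r < 0" | "r = 0"
    by linarith
  then show ?thesis
  proof cases
    case 1
    then show ?thesis using pos[of 1] by simp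
  next
    case 2
    then show ?thesis using pos[of "-1"] by simp
  next
    case 3
    then show ?thesis using nonneg_0[of 1] nonneg_0[of "-1"] by simp
  qed
qed

section \<open>Pairs solving the contiguous system\<close>

lemma has_vector_derivative_along_ray:
  assumes "(H has_field_derivative H') (at (of_real t * z))"
  shows "((\<lambda>s. H (of_real s * z)) has_vector_derivative z * H') (at t)"
proof -
  have "((\<lambda>w. H (w * z)) has_field_derivative H' * z) (at (of_real t))"
    using DERIV_chain2[OF assms DERIV_cmult_right[OF DERIV_ident, of z]] by simp
  from has_vector_derivative_real_field[OF this] show ?thesis
    by (simp add: mult.commute)
qed

lemma has_real_derivative_cmod_power2:
  assumes "(h has_vector_derivative h') (at t)"
  shows "((\<lambda>t. (cmod (h t))\<^sup>2) has_real_derivative 2 * Re (cnj (h t) * h')) (at t)"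
proof -
  have "((\<lambda>t. Re (cnj (h t) * h t)) has_real_derivative Re (cnj (h t) * h' + cnj h' * h t)) (at t)"
    by (intro derivative_intros assms)
  moreover have "(cmod w)\<^sup>2 = Re (cnj w * w)" for w
    unfolding cmod_power2 by (simp add: power2_eq_square)
  ultimately show ?thesis
    by (simp add: algebra_simps)
qed

lemma has_real_derivative_singular_ode:
  assumes "0 < t" "(Q has_real_derivative Q') (at t)" "t * Q' = t * R - c * Q t"
  shows "(Q has_real_derivative R - c / t * Q t) (at t)"
proof -
  have "Q' = R - c / t * Q t"
    using assms(1,3) by (simp add: field_simps)
  with assms(2) show ?thesis
    by simp
qed

locale confluent_pair =
  fixes F G F' G' :: "complex \<Rightarrow> complex" and \<gamma> :: real
  assumes F_deriv: "\<And>w. (F has_field_derivative F' w) (at w)"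
    and G_deriv: "\<And>w. (G has_field_derivative G' w) (at w)"
    and F_ode: "\<And>w. w * F' w = \<gamma> * (G w - F w)"
    and G_ode: "\<And>w. w * G' w = \<gamma> * (F w - G w) + w * G w"
    and F_0: "F 0 = 1"
    and G_0: "G 0 = 1"
    and gamma_gt: "-1/2 < \<gamma>"
begin

definition modulus_gap :: "complex \<Rightarrow> real \<Rightarrow> real" where
  "modulus_gap z t = (cmod (G (of_real t * z)))\<^sup>2 - (cmod (F (of_real t * z)))\<^sup>2"

definition pairing :: "complex \<Rightarrow> complex" where
  "pairing w = cnj (G w) * G' w - cnj (F w) * F' w"

text \<open>This is \<open>Re (t * pairing (t * \<i> * a))\<close>, written without \<open>F'\<close> and \<open>G'\<close> so that it can be
  differentiated along the ray.\<close>
definition ray_pairing :: "real \<Rightarrow> real \<Rightarrow> real" where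
  "ray_pairing a t = t * (cmod (G (of_real t * (\<i> * of_real a))))\<^sup>2
     + 2 * \<gamma> / a * Im (cnj (G (of_real t * (\<i> * of_real a))) * F (of_real t * (\<i> * of_real a)))"

lemma G_nonzero_near_0: "eventually (\<lambda>t. 0 < cmod (G (of_real t * z))) (at_right 0)"
proof -
  have "continuous (at 0) (\<lambda>t. G (of_real t * z))"
    using has_vector_derivative_continuous[OF has_vector_derivative_along_ray[OF G_deriv]] .
  then have "((\<lambda>t. cmod (G (of_real t * z))) \<longlongrightarrow> 1) (at_right 0)"
    using G_0 by (auto simp: continuous_at intro: tendsto_mono[OF at_within_le_at] tendsto_norm[THEN tendsto_eq_rhs])
  then show ?thesis
    by (rule order_tendstoD) simp
qed

lemma modulus_gap_has_real_derivative:
  "(modulus_gap z has_real_derivative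
     2 * Re (cnj (G (of_real t * z)) * (z * G' (of_real t * z)))
     - 2 * Re (cnj (F (of_real t * z)) * (z * F' (of_real t * z)))) (at t)"
  unfolding modulus_gap_def[abs_def]
  by (intro DERIV_diff has_real_derivative_cmod_power2 has_vector_derivative_along_ray F_deriv G_deriv)

lemma modulus_gap_singular_ode:
  assumes "0 < t"
  shows "(modulus_gap z has_real_derivative
           2 * Re z * (cmod (G (of_real t * z)))\<^sup>2 - 2 * \<gamma> / t * modulus_gap z t) (at t)"
proof (rule has_real_derivative_singular_ode[OF assms modulus_gap_has_real_derivative])
  define w where "w = of_real t * z"
  define A where "A = cnj (G w) * (z * G' w)"
  define B where "B = cnj (F w) * (z * F' w)"
  have "t * (2 * Re A - 2 * Re B) = 2 * Re (of_real t * A - of_real t * B)"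
    by (simp add: algebra_simps)
  also have "of_real t * A - of_real t * B = cnj (G w) * (w * G' w) - cnj (F w) * (w * F' w)"
    by (simp add: A_def B_def w_def algebra_simps)
  also have "2 * Re (cnj (G w) * (w * G' w) - cnj (F w) * (w * F' w))
             = t * (2 * Re z * (cmod (G w))\<^sup>2) - 2 * \<gamma> * modulus_gap z t"
    unfolding F_ode G_ode modulus_gap_def cmod_power2 w_def by (simp add: power2_eq_square algebra_simps)
  finally show "t * (2 * Re A - 2 * Re B) = t * (2 * Re z * (cmod (G w))\<^sup>2) - 2 * \<gamma> * modulus_gap z t" .
qed

lemma modulus_gap_0: "modulus_gap z 0 = 0"
  by (simp add: modulus_gap_def F_0 G_0)

lemma modulus_gap_differentiable: "modulus_gap z differentiable (at t)"
  using modulus_gap_has_real_derivative real_differentiable_def by blast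

lemma sgn_modulus_gap: "sgn (modulus_gap z 1) = sgn (Re z)"
proof -
  have "sgn (modulus_gap z 1) = sgn (2 * Re z)"
    using gamma_gt G_nonzero_near_0[of z]
    by (intro sgn_singular_ode[where P = "\<lambda>t. (cmod (G (of_real t * z)))\<^sup>2", OF _ _ modulus_gap_0
          modulus_gap_differentiable modulus_gap_singular_ode]) (auto elim!: eventually_mono)
  then show ?thesis
    by (simp add: sgn_mult)
qed

lemma ray_pairing_has_real_derivative:
  fixes a t :: real
  defines "w \<equiv> of_real t * (\<i> * of_real a)"
  shows "(ray_pairing a has_real_derivative
           (cmod (G w))\<^sup>2 + t * (2 * Re (cnj (G w) * (\<i> * of_real a * G' w)))
           + 2 * \<gamma> / a * Im (cnj (G w) * (\<i> * of_real a * F' w) + cnj (\<i> * of_real a * G' w) * F w)) (at t)"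
proof -
  let ?z = "\<i> * of_real a"
  note G_ray = has_vector_derivative_along_ray[where t = t and z = ?z, OF G_deriv]
  note F_ray = has_vector_derivative_along_ray[where t = t and z = ?z, OF F_deriv]
  have "((\<lambda>s. s * (cmod (G (of_real s * ?z)))\<^sup>2) has_real_derivative
          1 * (cmod (G (of_real t * ?z)))\<^sup>2
          + 2 * Re (cnj (G (of_real t * ?z)) * (?z * G' (of_real t * ?z))) * t) (at t)"
    by (rule DERIV_mult[OF DERIV_ident has_real_derivative_cmod_power2[OF G_ray]])
  moreover have "((\<lambda>s. Im (cnj (G (of_real s * ?z)) * F (of_real s * ?z))) has_real_derivative
                   Im (cnj (G (of_real t * ?z)) * (?z * F' (of_real t * ?z))
                       + cnj (?z * G' (of_real t * ?z)) * F (of_real t * ?z))) (at t)"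
    by (intro has_field_derivative_Im has_vector_derivative_mult has_vector_derivative_cnj G_ray F_ray)
  ultimately have "(ray_pairing a has_real_derivative
      1 * (cmod (G (of_real t * ?z)))\<^sup>2 + 2 * Re (cnj (G (of_real t * ?z)) * (?z * G' (of_real t * ?z))) * t
      + 2 * \<gamma> / a * Im (cnj (G (of_real t * ?z)) * (?z * F' (of_real t * ?z))
                       + cnj (?z * G' (of_real t * ?z)) * F (of_real t * ?z))) (at t)"
    unfolding ray_pairing_def[abs_def] by (rule DERIV_add[OF _ DERIV_cmult])
  then show ?thesis
    by (rule DERIV_cong) (simp only: w_def mult_1 mult.commute)
qed

lemma ray_pairing_singular_ode:
  assumes "0 < t" "a \<noteq> 0"
  shows "(ray_pairing a has_real_derivative
           (cmod (G (of_real t * (\<i> * of_real a))))\<^sup>2 - 2 * \<gamma> / t * ray_pairing a t) (at t)"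
proof (rule has_real_derivative_singular_ode[OF assms(1) ray_pairing_has_real_derivative])
  define z where "z = \<i> * of_real a"
  define w where "w = of_real t * z"
  define A where "A = cnj (G w) * (z * G' w)"
  define B where "B = cnj (G w) * (z * F' w) + cnj (z * G' w) * F w"
  have "t * ((cmod (G w))\<^sup>2 + t * (2 * Re A) + 2 * \<gamma> / a * Im B)
        = t * (cmod (G w))\<^sup>2 + 2 * t * Re (of_real t * A) + 2 * \<gamma> / a * Im (of_real t * B)"
    by (simp add: algebra_simps)
  also have "of_real t * A = cnj (G w) * (w * G' w)"
    by (simp add: A_def w_def algebra_simps)
  also have "of_real t * B = cnj (G w) * (w * F' w) + cnj (w * G' w) * F w"
    by (simp add: B_def w_def algebra_simps)
  also have "t * (cmod (G w))\<^sup>2 + 2 * t * Re (cnj (G w) * (w * G' w))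
               + 2 * \<gamma> / a * Im (cnj (G w) * (w * F' w) + cnj (w * G' w) * F w)
             = t * (cmod (G w))\<^sup>2 - 2 * \<gamma> * ray_pairing a t"
    unfolding F_ode G_ode ray_pairing_def cmod_power2 w_def z_def
    using assms(2) by (simp add: power2_eq_square field_simps)
  finally show "t * ((cmod (G w))\<^sup>2 + t * (2 * Re A) + 2 * \<gamma> / a * Im B)
                = t * (cmod (G w))\<^sup>2 - 2 * \<gamma> * ray_pairing a t" .
qed

lemma ray_pairing_pos:
  assumes "a \<noteq> 0"
  shows "0 < ray_pairing a 1"
proof (rule singular_ode_pos[where Q = "ray_pairing a" and b = 1 and c = "2 * \<gamma>"
      and R = "\<lambda>t. (cmod (G (of_real t * (\<i> * of_real a))))\<^sup>2"])
  show "ray_pairing a 0 = 0"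
    by (simp add: ray_pairing_def F_0 G_0)
  show "ray_pairing a differentiable (at 0)"
    using ray_pairing_has_real_derivative real_differentiable_def by blast
  show "(ray_pairing a has_real_derivative
          (cmod (G (of_real t * (\<i> * of_real a))))\<^sup>2 - 2 * \<gamma> / t * ray_pairing a t) (at t)"
    if "0 < t" "t \<le> 1" for t
    using ray_pairing_singular_ode[OF that(1) assms] .
  show "eventually (\<lambda>t. 0 < (cmod (G (of_real t * (\<i> * of_real a))))\<^sup>2) (at_right 0)"
    using G_nonzero_near_0 by (rule eventually_mono) simp
qed (use gamma_gt in auto)

lemma pairing_imaginary_axis:
  assumes "a \<noteq> 0"
  shows "pairing (\<i> * of_real a) = of_real (ray_pairing a 1)"
proof -
  let ?w = "\<i> * of_real a"
  have "modulus_gap ?w 1 = 0"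
    using sgn_modulus_gap[of ?w] by (simp add: sgn_zero_iff)
  then have gap: "(cmod (G ?w))\<^sup>2 = (cmod (F ?w))\<^sup>2"
    by (simp add: modulus_gap_def)
  have "?w * pairing ?w = cnj (G ?w) * (?w * G' ?w) - cnj (F ?w) * (?w * F' ?w)"
    by (simp add: pairing_def algebra_simps)
  also have "\<dots> = ?w * of_real (ray_pairing a 1)"
    using gap assms unfolding F_ode G_ode ray_pairing_def cmod_power2
    by (simp add: complex_eq_iff field_simps power2_eq_square)
  finally show ?thesis
    using assms by simp
qed

end

section \<open>The pair \<open>\<^sub>1F\<^sub>1(\<gamma>; 2\<gamma>+1)\<close>, \<open>\<^sub>1F\<^sub>1(\<gamma>+1; 2\<gamma>+1)\<close>\<close>

lemma confluent_pair_hyp1F1: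
  fixes \<gamma> :: real
  assumes "-1/2 < \<gamma>"
  shows "confluent_pair
           (hyp1F1 (of_real \<gamma>) (2 * of_real \<gamma> + 1)) (hyp1F1 (1 + of_real \<gamma>) (2 * of_real \<gamma> + 1))
           (\<lambda>w. of_real \<gamma> / (2 * of_real \<gamma> + 1) * hyp1F1 (1 + of_real \<gamma>) (2 * of_real \<gamma> + 2) w)
           (\<lambda>w. (1 + of_real \<gamma>) / (2 * of_real \<gamma> + 1) * hyp1F1 (2 + of_real \<gamma>) (2 * of_real \<gamma> + 2) w)
           \<gamma>"
proof -
  define \<alpha> :: complex where "\<alpha> = of_real \<gamma>"
  define \<beta> :: complex where "\<beta> = 2 * \<alpha> + 1"
  have Re_\<beta>: "0 < Re \<beta>"
    using assms by (simp add: \<beta>_def \<alpha>_def)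
  have shifts: "1 + \<alpha> = \<alpha> + 1" "2 + \<alpha> = \<alpha> + 2" "2 * \<alpha> + 2 = \<beta> + 1" "\<beta> - \<alpha> - 1 = of_real \<gamma>"
    by (simp_all add: \<beta>_def \<alpha>_def)
  show ?thesis
    unfolding \<alpha>_def[symmetric] \<beta>_def[symmetric] shifts
  proof
    show "(hyp1F1 \<alpha> \<beta> has_field_derivative \<alpha> / \<beta> * hyp1F1 (\<alpha> + 1) (\<beta> + 1) w) (at w)" for w
      using hyp1F1_has_field_derivative[OF Re_\<beta>] .
    show "(hyp1F1 (\<alpha> + 1) \<beta> has_field_derivative (\<alpha> + 1) / \<beta> * hyp1F1 (\<alpha> + 2) (\<beta> + 1) w) (at w)" for w
      using hyp1F1_has_field_derivative[OF Re_\<beta>, of "\<alpha> + 1" w] by (simp add: add.assoc)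
    show "w * (\<alpha> / \<beta> * hyp1F1 (\<alpha> + 1) (\<beta> + 1) w) = of_real \<gamma> * (hyp1F1 (\<alpha> + 1) \<beta> w - hyp1F1 \<alpha> \<beta> w)" for w
      using hyp1F1_deriv_contiguous[OF Re_\<beta>] by (simp add: \<alpha>_def)
    show "w * ((\<alpha> + 1) / \<beta> * hyp1F1 (\<alpha> + 2) (\<beta> + 1) w)
            = of_real \<gamma> * (hyp1F1 \<alpha> \<beta> w - hyp1F1 (\<alpha> + 1) \<beta> w) + w * hyp1F1 (\<alpha> + 1) \<beta> w" for w
      using hyp1F1_succ_deriv_contiguous[OF Re_\<beta>, of w \<alpha>] by (simp add: shifts)
  qed (use assms in simp_all)
qed

lemma divide_pos_if_sgn_eq:
  fixes x y :: real
  assumes "sgn x = sgn y" "y \<noteq> 0"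
  shows "0 < x / y"
  using assms by (auto simp: sgn_if zero_less_divide_iff split: if_splits)

context
  fixes \<gamma> :: real
  assumes gamma_gt: "-1/2 < \<gamma>"
begin

interpretation kummer: confluent_pair
  "hyp1F1 (of_real \<gamma>) (2 * of_real \<gamma> + 1)" "hyp1F1 (1 + of_real \<gamma>) (2 * of_real \<gamma> + 1)"
  "\<lambda>w. of_real \<gamma> / (2 * of_real \<gamma> + 1) * hyp1F1 (1 + of_real \<gamma>) (2 * of_real \<gamma> + 2) w"
  "\<lambda>w. (1 + of_real \<gamma>) / (2 * of_real \<gamma> + 1) * hyp1F1 (2 + of_real \<gamma>) (2 * of_real \<gamma> + 2) w" \<gamma>
  by (rule confluent_pair_hyp1F1[OF gamma_gt])

lemma hyp1F1_modulus_gap_div_Im_pos: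
  assumes "Im a \<noteq> 0"
  shows "(2 * \<gamma> + 1) *
           ((cmod (hyp1F1 (of_real \<gamma>) (2 * of_real \<gamma> + 1) (\<i> * a)))\<^sup>2
            - (cmod (hyp1F1 (1 + of_real \<gamma>) (2 * of_real \<gamma> + 1) (\<i> * a)))\<^sup>2) / (2 * Im a) > 0"
proof -
  let ?d = "(cmod (hyp1F1 (of_real \<gamma>) (2 * of_real \<gamma> + 1) (\<i> * a)))\<^sup>2
            - (cmod (hyp1F1 (1 + of_real \<gamma>) (2 * of_real \<gamma> + 1) (\<i> * a)))\<^sup>2"
  have gap: "kummer.modulus_gap (\<i> * a) 1 = - ?d"
    by (simp add: kummer.modulus_gap_def)
  have "sgn ?d = - sgn (kummer.modulus_gap (\<i> * a) 1)"
    unfolding gap sgn_minus by simp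
  also have "\<dots> = sgn (Im a)"
    unfolding kummer.sgn_modulus_gap by (simp add: sgn_minus)
  finally have "sgn ?d = sgn (Im a)" .
  with assms have "0 < (2 * \<gamma> + 1) / 2 * (?d / Im a)"
    using gamma_gt by (intro mult_pos_pos divide_pos_if_sgn_eq) simp_all
  then show ?thesis
    by (simp only: times_divide_times_eq)
qed

lemma T_fun_real_pos: "Im (T_fun \<gamma> a) = 0 \<and> 0 < Re (T_fun \<gamma> a)"
proof (cases "a = 0")
  case True
  then show ?thesis
    by (simp add: T_fun_def)
next
  case False
  let ?F = "hyp1F1 (of_real \<gamma>) (2 * of_real \<gamma> + 1)"
  let ?G = "hyp1F1 (1 + of_real \<gamma>) (2 * of_real \<gamma> + 1)"
  have Re_pos: "0 < Re (2 * complex_of_real \<gamma> + 1)"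
    using gamma_gt by simp
  have cnj_F: "cnj (?F (\<i> * of_real a)) = ?F (- \<i> * of_real a)"
    using cnj_hyp1F1[OF Re_pos, of "of_real \<gamma>" "\<i> * of_real a"] by simp
  have cnj_G: "cnj (?G (\<i> * of_real a)) = ?G (- \<i> * of_real a)"
    using cnj_hyp1F1[OF Re_pos, of "1 + of_real \<gamma>" "\<i> * of_real a"] by simp
  have cancel: "x * y * c - u * v * d = b * (x * (c / b * y) - u * (d / b * v))"
    if "b \<noteq> 0" for b c d u v x y :: complex
    using that by (simp add: field_simps)
  have "T_fun \<gamma> a = (2 * of_real \<gamma> + 1) * kummer.pairing (\<i> * of_real a)"
    unfolding T_fun_def kummer.pairing_def cnj_F cnj_G
    using Re_pos by (intro cancel) (metis zero_complex.sel(1) order_less_irrefl)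
  also have "\<dots> = of_real ((2 * \<gamma> + 1) * kummer.ray_pairing a 1)"
    using kummer.pairing_imaginary_axis[OF False] by simp
  finally show ?thesis
    using kummer.ray_pairing_pos[OF False] gamma_gt by simp
qed

end

theorem lemma2p4:
  fixes \<gamma> :: real
  assumes "\<gamma> > - 1 / 2"
  shows "(\<forall>a :: complex. Im a \<noteq> 0 \<longrightarrow>
            (2 * \<gamma> + 1) *
              ((cmod (hyp1F1 (of_real \<gamma>) (2 * of_real \<gamma> + 1) (\<i> * a)))\<^sup>2
               - (cmod (hyp1F1 (1 + of_real \<gamma>) (2 * of_real \<gamma> + 1) (\<i> * a)))\<^sup>2)
              / (2 * Im a) > 0)
       \<and> (\<forall>a :: real. Im (T_fun \<gamma> a) = 0 \<and> Re (T_fun \<gamma> a) > 0)"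
  using hyp1F1_modulus_gap_div_Im_pos[of \<gamma>] T_fun_real_pos[of \<gamma>] assms by auto

end
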